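(* Let $n \ge 3$ be an integer and let $I$ be a degree-based topological index with coefficients $c_{12},c_{13},c_{22},c_{23},c_{33}$. Define $c'_{12} = c_{12}-4c_{22}+3c_{23}$, $c'_{13} = c_{13}-3c_{22}+2c_{23}$, $c'_{33} = c_{22}-2c_{23}+c_{33}$. If $\max\{c'_{12},c'_{13}\}<\min\{0,-c'_{33}\}$, then the cycle $C_n$ on $n$ vertices is, up to isomorphism, the only graph in $\mathcal{G}_3(n,n)$ that maximizes $I$.
   Context: For integers $n,m$, $\mathcal{G}_3(n,m)$ denotes the set of simple connected undirected graphs (chemical graphs) with $n$ vertices, $m$ edges and maximum degree at most $3$; in particular $\mathcal{G}_3(n,n)$ is the set of connected unicyclic graphs of order $n$ with maximum degree at most $3$. For a graph $G$ and $1\le i\le j$, an $ij$-edge is an edge whose endpoints have degrees $i$ and $j$, and $m_{ij}$ denotes the number of $ij$-edges of $G$. A degree-based topological index $I$ is a function on chemical graphs of order $n\ge 3$ of the form $I(G)=c_{12}m_{12}+c_{13}m_{13}+c_{22}m_{22}+c_{23}m_{23}+c_{33}m_{33}$, where the $c_{ij}$ are fixed real numbers. *)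

theory Defs
  imports Main Complex_Main
begin

definition simple_graph :: "nat \<Rightarrow> nat set set \<Rightarrow> bool" where
  "simple_graph n E \<longleftrightarrow> (\<forall>e\<in>E. \<exists>u v. e = {u, v} \<and> u \<noteq> v \<and> u < n \<and> v < n)"

definition degree :: "nat set set \<Rightarrow> nat \<Rightarrow> nat" where
  "degree E v = card {e\<in>E. v \<in> e}"

definition adj_rel :: "nat set set \<Rightarrow> (nat \<times> nat) set" where
  "adj_rel E = {(u, v). {u, v} \<in> E}"

definition connected_graph :: "nat \<Rightarrow> nat set set \<Rightarrow> bool" where
  "connected_graph n E \<longleftrightarrow> (\<forall>u<n. \<forall>v<n. (u, v) \<in> (adj_rel E)\<^sup>*)"

definition chem_graphs :: "nat \<Rightarrow> nat \<Rightarrow> nat set set set" where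
  "chem_graphs n m = {E. simple_graph n E \<and> connected_graph n E \<and> card E = m
                        \<and> (\<forall>v<n. degree E v \<le> 3)}"

definition m_ij :: "nat set set \<Rightarrow> nat \<Rightarrow> nat \<Rightarrow> nat" where
  "m_ij E i j = card {e\<in>E. \<exists>u v. e = {u, v} \<and> u \<noteq> v \<and>
       ((degree E u = i \<and> degree E v = j) \<or> (degree E u = j \<and> degree E v = i))}"

definition topo_index ::
  "real \<Rightarrow> real \<Rightarrow> real \<Rightarrow> real \<Rightarrow> real \<Rightarrow> nat set set \<Rightarrow> real" where
  "topo_index c12 c13 c22 c23 c33 E =
     c12 * m_ij E 1 2 + c13 * m_ij E 1 3 + c22 * m_ij E 2 2 + c23 * m_ij E 2 3 + c33 * m_ij E 3 3"

definition cycle_graph :: "nat \<Rightarrow> nat set set" where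
  "cycle_graph n = {{i, Suc i mod n} | i. i < n}"

definition graph_iso :: "nat \<Rightarrow> nat set set \<Rightarrow> nat set set \<Rightarrow> bool" where
  "graph_iso n E F \<longleftrightarrow> (\<exists>f. bij_betw f {0..<n} {0..<n} \<and> (\<lambda>e. f ` e) ` E = F)"

end

(*
  For a connected chemical graph G with n vertices and n edges, counting edge ends by degree
  gives n1 = n3, and solving the edge-count identities for m22 and m23 yields
    I(G) = n c22 + m12 c'12 + m13 c'13 + m33 c'33,   where m12 + m13 = n1.
  Connectivity forces at least n - n3 edges leaving the set of degree-3 vertices, so
  m33 <= n3 = m12 + m13. Hence I(G) <= n c22 + n1 (max c'12 c'13 + max 0 c'33), and the
  hypothesis makes the last factor negative. So I(G) <= n c22 = I(C_n), with equality only
  if n1 = 0, i.e. G is 2-regular, and a connected 2-regular graph is a cycle.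
*)

theory Submission
  imports Defs
begin

section \<open>Simple and connected graphs\<close>

lemma simple_graph_vertex_less:
  assumes "simple_graph n E" "e \<in> E" "x \<in> e"
  shows "x < n"
  using assms unfolding simple_graph_def by fastforce

lemma simple_graph_edge_neq:
  assumes "simple_graph n E" "{x, y} \<in> E"
  shows "x \<noteq> y"
  using assms unfolding simple_graph_def by (auto simp: doubleton_eq_iff)

lemma simple_graph_edges_subset:
  assumes "simple_graph n E"
  shows "E \<subseteq> Pow {0..<n}"
  using simple_graph_vertex_less[OF assms] by auto

lemma simple_graph_finite:
  assumes "simple_graph n E"
  shows "finite E"
  using simple_graph_edges_subset[OF assms] by (rule finite_subset) simp

lemma rtrancl_adj_rel_closed:
  assumes "(u, w) \<in> (adj_rel E)\<^sup>*" "u \<in> S"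
    and "\<And>x y. {x, y} \<in> E \<Longrightarrow> x \<in> S \<Longrightarrow> y \<in> S"
  shows "w \<in> S"
  using assms(1,2) by induction (auto simp: adj_rel_def intro: assms(3))

lemma connected_graph_crossing_edge:
  assumes "connected_graph n E" "s \<in> S" "s < n" "v < n" "v \<notin> S"
  obtains x y where "x \<in> S" "y \<notin> S" "{x, y} \<in> E"
proof -
  have "(s, v) \<in> (adj_rel E)\<^sup>*"
    using assms(1,3,4) unfolding connected_graph_def by blast
  then show ?thesis
    using rtrancl_adj_rel_closed[of s v E S] assms(2,5) that by blast
qed

lemma connected_graph_card_compl_le:
  assumes "simple_graph n E" "connected_graph n E" "S \<subseteq> {0..<n}" "S \<noteq> {}"
  shows "card ({0..<n} - S) \<le> card {e\<in>E. \<not> e \<subseteq> S}"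
proof -
  have bound: "k \<le> card {e\<in>E. \<not> e \<subseteq> S}"
    if "card ({0..<n} - S) = k" "S \<subseteq> {0..<n}" "S \<noteq> {}" for k S
    using that
  proof (induction k arbitrary: S)
    case 0
    then show ?case by simp
  next
    case (Suc k)
    obtain v where v: "v < n" "v \<notin> S"
      using Suc.prems(1) by (metis Diff_iff atLeastLessThan_iff card.empty equals0I nat.distinct(1))
    obtain s where s: "s \<in> S"
      using Suc.prems(3) by blast
    then have "s < n"
      using Suc.prems(2) by auto
    obtain x y where xy: "x \<in> S" "y \<notin> S" "{x, y} \<in> E"
      by (rule connected_graph_crossing_edge[OF assms(2) s \<open>s < n\<close> v])
    have "y < n"
      using simple_graph_vertex_less[OF assms(1) xy(3)] by simp
    have "{0..<n} - insert y S = ({0..<n} - S) - {y}"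
      by blast
    then have "card ({0..<n} - insert y S) = k"
      using Suc.prems(1) \<open>y < n\<close> xy(2) by simp
    then have "k \<le> card {e\<in>E. \<not> e \<subseteq> insert y S}"
      by (rule Suc.IH) (use Suc.prems \<open>y < n\<close> in auto)
    also have "\<dots> < card {e\<in>E. \<not> e \<subseteq> S}"
    proof (rule psubset_card_mono)
      show "finite {e\<in>E. \<not> e \<subseteq> S}"
        using simple_graph_finite[OF assms(1)] by simp
      have "{x, y} \<in> {e\<in>E. \<not> e \<subseteq> S}" "{x, y} \<notin> {e\<in>E. \<not> e \<subseteq> insert y S}"
        using xy by auto
      moreover have "{e\<in>E. \<not> e \<subseteq> insert y S} \<subseteq> {e\<in>E. \<not> e \<subseteq> S}"
        using subset_insertI2 by blast
      ultimately show "{e\<in>E. \<not> e \<subseteq> insert y S} \<subset> {e\<in>E. \<not> e \<subseteq> S}"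
        by blast
    qed
    finally show ?case
      by simp
  qed
  show ?thesis
    by (rule bound[OF refl assms(3,4)])
qed

lemma connected_graph_card_edges_within:
  assumes "simple_graph n E" "connected_graph n E" "S \<subseteq> {0..<n}" "S \<noteq> {}"
  shows "card {e\<in>E. e \<subseteq> S} + (n - card S) \<le> card E"
proof -
  have fin: "finite E"
    using simple_graph_finite[OF assms(1)] .
  have "n - card S = card ({0..<n} - S)"
    using assms(3) by (simp add: card_Diff_subset finite_subset)
  also have "\<dots> \<le> card {e\<in>E. \<not> e \<subseteq> S}"
    using connected_graph_card_compl_le[OF assms] .
  moreover have "card E = card ({e\<in>E. e \<subseteq> S} \<union> {e\<in>E. \<not> e \<subseteq> S})"
    by (rule arg_cong[where f = card]) blast
  moreover have "\<dots> = card {e\<in>E. e \<subseteq> S} + card {e\<in>E. \<not> e \<subseteq> S}"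
    by (rule card_Un_disjoint) (use fin in auto)
  ultimately show ?thesis
    by linarith
qed

lemma obtain_less_notin:
  assumes "finite F" "card F < n"
  obtains w where "w < n" "w \<notin> F"
proof -
  have "\<not> {0..<n} \<subseteq> F"
    using card_mono[OF assms(1), of "{0..<n}"] assms(2) by auto
  then obtain w where "w \<in> {0..<n}" "w \<notin> F"
    by blast
  then show ?thesis
    using that by simp
qed

lemma connected_graph_degree_pos:
  assumes "simple_graph n E" "connected_graph n E" "2 \<le> n" "v < n"
  shows "0 < degree E v"
proof (rule ccontr)
  assume "\<not> 0 < degree E v"
  then have no_edge: "{e\<in>E. v \<in> e} = {}"
    using simple_graph_finite[OF assms(1)] unfolding degree_def by simp
  obtain w where w: "w < n" "w \<notin> {v}"
    by (rule obtain_less_notin[of "{v}" n]) (use assms(3) in auto)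
  have "(v, w) \<in> (adj_rel E)\<^sup>*"
    using assms(2,4) w(1) unfolding connected_graph_def by blast
  then have "w \<in> {v}"
    by (rule rtrancl_adj_rel_closed) (use no_edge in auto)
  with w show False
    by blast
qed

lemma degree_one_edge_unique:
  assumes "degree E u = 1" "e \<in> E" "u \<in> e" "e' \<in> E" "u \<in> e'"
  shows "e = e'"
proof -
  obtain e0 where e0: "{e\<in>E. u \<in> e} = {e0}"
    using assms(1) unfolding degree_def by (rule card_1_singletonE)
  have "e \<in> {e\<in>E. u \<in> e}" "e' \<in> {e\<in>E. u \<in> e}"
    using assms(2-5) by simp_all
  then show ?thesis
    unfolding e0 by simp
qed

lemma connected_graph_no_isolated_edge:
  assumes "connected_graph n E" "3 \<le> n" "{u, v} \<in> E" "u < n"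
  shows "degree E u \<noteq> 1 \<or> degree E v \<noteq> 1"
proof (rule ccontr)
  assume "\<not> ?thesis"
  then have deg: "degree E u = 1" "degree E v = 1"
    by auto
  have closed: "y \<in> {u, v}" if "{x, y} \<in> E" "x \<in> {u, v}" for x y
  proof -
    have "{x, y} = {u, v}"
      using that deg degree_one_edge_unique[OF _ that(1) _ assms(3)] by auto
    then show ?thesis
      by auto
  qed
  obtain w where w: "w < n" "w \<notin> {u, v}"
    by (rule obtain_less_notin[of "{u, v}" n]) (use assms(2) in \<open>auto simp: card_insert_if\<close>)
  have "(u, w) \<in> (adj_rel E)\<^sup>*"
    using assms(1,4) w(1) unfolding connected_graph_def by blast
  then have "w \<in> {u, v}"
    by (rule rtrancl_adj_rel_closed) (use closed in auto)
  with w show False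
    by blast
qed

section \<open>Counting edges by the degrees of their ends\<close>

definition n_deg :: "nat \<Rightarrow> nat set set \<Rightarrow> nat \<Rightarrow> nat" where
  "n_deg n E k = card {v\<in>{0..<n}. degree E v = k}"

definition ij_edge :: "nat set set \<Rightarrow> nat \<Rightarrow> nat \<Rightarrow> nat set \<Rightarrow> bool" where
  "ij_edge E i j e \<longleftrightarrow> (\<exists>u v. e = {u, v} \<and> u \<noteq> v \<and>
     ((degree E u = i \<and> degree E v = j) \<or> (degree E u = j \<and> degree E v = i)))"

lemma m_ij_eq_card: "m_ij E i j = card {e\<in>E. ij_edge E i j e}"
  unfolding m_ij_def ij_edge_def ..

lemma m_ij_eq_sum: "finite E \<Longrightarrow> m_ij E i j = (\<Sum>e\<in>E. of_bool (ij_edge E i j e))"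
  unfolding m_ij_eq_card by (simp add: Int_def)

lemma ij_edge_doubleton:
  assumes "u \<noteq> v"
  shows "ij_edge E i j {u, v} \<longleftrightarrow>
    (degree E u = i \<and> degree E v = j) \<or> (degree E u = j \<and> degree E v = i)"
  using assms unfolding ij_edge_def by (auto simp: doubleton_eq_iff)

lemma sum_edges_card_endpoints_of_degree:
  assumes "simple_graph n E"
  shows "(\<Sum>e\<in>E. card {x\<in>e. degree E x = k}) = k * n_deg n E k"
proof -
  let ?V = "{0..<n}"
  have fin: "finite E"
    using simple_graph_finite[OF assms] .
  have "(\<Sum>e\<in>E. card {x\<in>e. degree E x = k})
      = (\<Sum>e\<in>E. \<Sum>v\<in>?V. of_bool (v \<in> e \<and> degree E v = k))"
  proof (rule sum.cong)
    fix e
    assume "e \<in> E"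
    then have "{x\<in>e. degree E x = k} = ?V \<inter> {v. v \<in> e \<and> degree E v = k}"
      using simple_graph_vertex_less[OF assms] by auto
    then show "card {x\<in>e. degree E x = k} = (\<Sum>v\<in>?V. of_bool (v \<in> e \<and> degree E v = k))"
      by simp
  qed simp
  also have "\<dots> = (\<Sum>v\<in>?V. \<Sum>e\<in>E. of_bool (v \<in> e \<and> degree E v = k))"
    by (rule sum.swap)
  also have "\<dots> = (\<Sum>v\<in>?V. of_bool (degree E v = k) * k)"
    by (rule sum.cong) (auto simp: degree_def fin Int_def)
  also have "\<dots> = k * n_deg n E k"
    unfolding n_deg_def by (simp add: Int_def)
  finally show ?thesis .
qed

lemma card_doubleton_filter:
  assumes "u \<noteq> v"
  shows "card {x\<in>{u, v}. P x} = of_bool (P u) + of_bool (P v)"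
proof -
  have "{x\<in>{u, v}. P x} = (if P u then {u} else {}) \<union> (if P v then {v} else {})"
    by auto
  then show ?thesis
    using assms by (simp add: card_Un_disjoint)
qed

lemma endpoint_degree_counts:
  assumes "u \<noteq> v" "degree E u \<in> {1, 2, 3}" "degree E v \<in> {1, 2, 3}"
    "degree E u \<noteq> 1 \<or> degree E v \<noteq> 1"
  defines "t i j \<equiv> of_bool (ij_edge E i j {u, v}) :: nat"
  shows "card {x\<in>{u, v}. degree E x = 1} = t 1 2 + t 1 3"
    and "card {x\<in>{u, v}. degree E x = 2} = t 1 2 + 2 * t 2 2 + t 2 3"
    and "card {x\<in>{u, v}. degree E x = 3} = t 1 3 + t 2 3 + 2 * t 3 3"
    and "t 1 2 + t 1 3 + t 2 2 + t 2 3 + t 3 3 = 1"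
  using assms(2-4) unfolding t_def card_doubleton_filter[OF assms(1)] ij_edge_doubleton[OF assms(1)]
  by auto

lemma degree_class_identities:
  assumes simple: "simple_graph n E"
    and degs: "\<And>v. v < n \<Longrightarrow> degree E v \<in> {1, 2, 3}"
    and no_K2: "\<And>u v. {u, v} \<in> E \<Longrightarrow> degree E u \<noteq> 1 \<or> degree E v \<noteq> 1"
  shows "n_deg n E 1 = m_ij E 1 2 + m_ij E 1 3"
    and "2 * n_deg n E 2 = m_ij E 1 2 + 2 * m_ij E 2 2 + m_ij E 2 3"
    and "3 * n_deg n E 3 = m_ij E 1 3 + m_ij E 2 3 + 2 * m_ij E 3 3"
    and "card E = m_ij E 1 2 + m_ij E 1 3 + m_ij E 2 2 + m_ij E 2 3 + m_ij E 3 3"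
proof -
  define t where "t i j e = (of_bool (ij_edge E i j e) :: nat)" for i j e
  have fin: "finite E"
    using simple_graph_finite[OF simple] .
  have m: "m_ij E i j = (\<Sum>e\<in>E. t i j e)" for i j
    unfolding t_def using m_ij_eq_sum[OF fin] .
  have per_edge: "card {x\<in>e. degree E x = 1} = t 1 2 e + t 1 3 e
      \<and> card {x\<in>e. degree E x = 2} = t 1 2 e + 2 * t 2 2 e + t 2 3 e
      \<and> card {x\<in>e. degree E x = 3} = t 1 3 e + t 2 3 e + 2 * t 3 3 e
      \<and> 1 = t 1 2 e + t 1 3 e + t 2 2 e + t 2 3 e + t 3 3 e" if "e \<in> E" for e
  proof -
    have "\<exists>u v. e = {u, v} \<and> u \<noteq> v \<and> u < n \<and> v < n"
      using simple that unfolding simple_graph_def by (rule bspec)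
    then obtain u v where uv: "e = {u, v}" "u \<noteq> v" "u < n" "v < n"
      by blast
    show ?thesis
      unfolding uv(1) t_def
      using endpoint_degree_counts[OF uv(2) degs[OF uv(3)] degs[OF uv(4)] no_K2] that uv(1)
      by simp
  qed
  have sum_deg: "k * n_deg n E k = (\<Sum>e\<in>E. card {x\<in>e. degree E x = k})" for k
    using sum_edges_card_endpoints_of_degree[OF simple] by simp
  show "n_deg n E 1 = m_ij E 1 2 + m_ij E 1 3"
    using sum_deg[of 1] per_edge by (simp add: m sum.distrib cong: sum.cong)
  show "2 * n_deg n E 2 = m_ij E 1 2 + 2 * m_ij E 2 2 + m_ij E 2 3"
    using sum_deg[of 2] per_edge by (simp add: m sum.distrib sum_distrib_left cong: sum.cong)
  show "3 * n_deg n E 3 = m_ij E 1 3 + m_ij E 2 3 + 2 * m_ij E 3 3"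
    using sum_deg[of 3] per_edge by (simp add: m sum.distrib sum_distrib_left cong: sum.cong)
  have "card E = (\<Sum>e\<in>E. 1)"
    by simp
  also have "\<dots> = (\<Sum>e\<in>E. t 1 2 e + t 1 3 e + t 2 2 e + t 2 3 e + t 3 3 e)"
    using per_edge by (intro sum.cong) auto
  finally show "card E = m_ij E 1 2 + m_ij E 1 3 + m_ij E 2 2 + m_ij E 2 3 + m_ij E 3 3"
    by (simp add: m sum.distrib)
qed

lemma card_vertices_by_degree:
  assumes "\<And>v. v < n \<Longrightarrow> degree E v \<in> {1, 2, 3}"
  shows "n = n_deg n E 1 + n_deg n E 2 + n_deg n E 3"
proof -
  have "n = (\<Sum>v\<in>{0..<n}. 1)"
    by simp
  also have "\<dots> = (\<Sum>v\<in>{0..<n}. of_bool (degree E v = 1) + of_bool (degree E v = 2)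
      + of_bool (degree E v = 3))"
    by (rule sum.cong) (use assms in auto)
  also have "\<dots> = n_deg n E 1 + n_deg n E 2 + n_deg n E 3"
    unfolding n_deg_def sum.distrib by (simp add: Int_def)
  finally show ?thesis .
qed

section \<open>Unicyclic chemical graphs\<close>

lemma chem_graphs_degree_cases:
  assumes "E \<in> chem_graphs n m" "2 \<le> n" "v < n"
  shows "degree E v \<in> {1, 2, 3}"
proof -
  have "0 < degree E v"
    using assms connected_graph_degree_pos[of n E v] unfolding chem_graphs_def by blast
  moreover have "degree E v \<le> 3"
    using assms unfolding chem_graphs_def by blast
  ultimately show ?thesis
    by auto
qed

lemma chem_graphs_no_isolated_edge:
  assumes "E \<in> chem_graphs n m" "3 \<le> n" "{u, v} \<in> E"
  shows "degree E u \<noteq> 1 \<or> degree E v \<noteq> 1"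
proof -
  have "simple_graph n E" "connected_graph n E"
    using assms(1) unfolding chem_graphs_def by blast+
  then show ?thesis
    using connected_graph_no_isolated_edge assms(2,3) simple_graph_vertex_less by blast
qed

lemma unicyclic_degree_class_identities:
  assumes "E \<in> chem_graphs n n" "3 \<le> n"
  shows "n_deg n E 1 = m_ij E 1 2 + m_ij E 1 3"
    and "2 * n_deg n E 2 = m_ij E 1 2 + 2 * m_ij E 2 2 + m_ij E 2 3"
    and "3 * n_deg n E 3 = m_ij E 1 3 + m_ij E 2 3 + 2 * m_ij E 3 3"
    and "n = m_ij E 1 2 + m_ij E 1 3 + m_ij E 2 2 + m_ij E 2 3 + m_ij E 3 3"
    and "n = n_deg n E 1 + n_deg n E 2 + n_deg n E 3"
proof -
  have simple: "simple_graph n E" and card: "card E = n"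
    using assms(1) unfolding chem_graphs_def by blast+
  have degs: "\<And>v. v < n \<Longrightarrow> degree E v \<in> {1, 2, 3}"
    using chem_graphs_degree_cases[OF assms(1)] assms(2) by simp
  note ids = degree_class_identities[OF simple degs chem_graphs_no_isolated_edge[OF assms]]
  show "n_deg n E 1 = m_ij E 1 2 + m_ij E 1 3"
    and "2 * n_deg n E 2 = m_ij E 1 2 + 2 * m_ij E 2 2 + m_ij E 2 3"
    and "3 * n_deg n E 3 = m_ij E 1 3 + m_ij E 2 3 + 2 * m_ij E 3 3"
    and "n = m_ij E 1 2 + m_ij E 1 3 + m_ij E 2 2 + m_ij E 2 3 + m_ij E 3 3"
    using ids card by simp_all
  show "n = n_deg n E 1 + n_deg n E 2 + n_deg n E 3"
    using card_vertices_by_degree degs by blast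
qed

text \<open>Handshaking with \<open>|E| = n\<close> gives \<open>n\<^sub>1 + 2n\<^sub>2 + 3n\<^sub>3 = 2(n\<^sub>1 + n\<^sub>2 + n\<^sub>3)\<close>.\<close>

lemma unicyclic_n_deg_3_eq_n_deg_1:
  assumes "E \<in> chem_graphs n n" "3 \<le> n"
  shows "n_deg n E 3 = n_deg n E 1"
  using unicyclic_degree_class_identities[OF assms] by linarith

lemma topo_index_unicyclic:
  assumes "E \<in> chem_graphs n n" "3 \<le> n"
  shows "topo_index c12 c13 c22 c23 c33 E = real n * c22
    + real (m_ij E 1 2) * (c12 - 4*c22 + 3*c23) + real (m_ij E 1 3) * (c13 - 3*c22 + 2*c23)
    + real (m_ij E 3 3) * (c22 - 2*c23 + c33)"
proof -
  note ids = unicyclic_degree_class_identities[OF assms] unicyclic_n_deg_3_eq_n_deg_1[OF assms]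
  have m22: "real (m_ij E 2 2) = real n - 4 * real (m_ij E 1 2) - 3 * real (m_ij E 1 3) + real (m_ij E 3 3)"
    and m23: "real (m_ij E 2 3) = 3 * real (m_ij E 1 2) + 2 * real (m_ij E 1 3) - 2 * real (m_ij E 3 3)"
    using ids by linarith+
  show ?thesis
    unfolding topo_index_def m22 m23 by (simp add: algebra_simps)
qed

text \<open>The 33-edges lie inside the set \<open>S\<close> of degree-3 vertices, and connectivity forces at least
  \<open>n - |S|\<close> further edges, leaving at most \<open>|S| = n\<^sub>3 = n\<^sub>1\<close> edges inside \<open>S\<close>.\<close>

lemma unicyclic_m_33_le:
  assumes "E \<in> chem_graphs n n" "3 \<le> n"
  shows "m_ij E 3 3 \<le> n_deg n E 1"
proof (cases "n_deg n E 3 = 0")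
  case True
  then show ?thesis
    using unicyclic_degree_class_identities(3)[OF assms] by simp
next
  case False
  define S where "S = {v\<in>{0..<n}. degree E v = 3}"
  have simple: "simple_graph n E" and conn: "connected_graph n E" and card: "card E = n"
    using assms(1) unfolding chem_graphs_def by blast+
  have S: "S \<subseteq> {0..<n}" "S \<noteq> {}" "card S = n_deg n E 1"
    using False unicyclic_n_deg_3_eq_n_deg_1[OF assms] unfolding S_def n_deg_def by auto
  have "{e\<in>E. ij_edge E 3 3 e} \<subseteq> {e\<in>E. e \<subseteq> S}"
    unfolding ij_edge_def S_def using simple_graph_vertex_less[OF simple] by fastforce
  then have "m_ij E 3 3 \<le> card {e\<in>E. e \<subseteq> S}"
    unfolding m_ij_eq_card by (rule card_mono[rotated]) (simp add: simple_graph_finite[OF simple])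
  moreover have "card S \<le> n"
    using S(1) by (metis card_atLeastLessThan card_mono diff_zero finite_atLeastLessThan)
  ultimately show ?thesis
    using connected_graph_card_edges_within[OF simple conn S(1,2)] card S(3) by linarith
qed

lemma unicyclic_two_regular:
  assumes "E \<in> chem_graphs n n" "3 \<le> n" "n_deg n E 1 = 0" "v < n"
  shows "degree E v = 2"
proof -
  have "n_deg n E 3 = 0"
    using unicyclic_n_deg_3_eq_n_deg_1[OF assms(1,2)] assms(3) by simp
  then have "degree E v \<noteq> 1" "degree E v \<noteq> 3"
    using assms(3,4) unfolding n_deg_def by auto
  then show ?thesis
    using chem_graphs_degree_cases[OF assms(1) _ assms(4)] assms(2) by auto
qed

section \<open>The cycle\<close>

lemma cycle_graph_eq_image: "cycle_graph n = (\<lambda>i. {i, Suc i mod n}) ` {0..<n}"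
  unfolding cycle_graph_def by auto

lemma simple_graph_cycle_graph:
  assumes "3 \<le> n"
  shows "simple_graph n (cycle_graph n)"
  unfolding simple_graph_def cycle_graph_eq_image
proof
  fix e
  assume "e \<in> (\<lambda>i. {i, Suc i mod n}) ` {0..<n}"
  then obtain i where i: "i < n" "e = {i, Suc i mod n}"
    by auto
  have "i \<noteq> Suc i mod n"
    using i(1) assms by (cases "Suc i = n") auto
  then show "\<exists>u v. e = {u, v} \<and> u \<noteq> v \<and> u < n \<and> v < n"
    using i assms by (intro exI[of _ i] exI[of _ "Suc i mod n"]) simp
qed

lemma card_cycle_graph:
  assumes "3 \<le> n"
  shows "card (cycle_graph n) = n"
proof -
  have "inj_on (\<lambda>i. {i, Suc i mod n}) {0..<n}"
  proof (rule inj_onI, rule ccontr)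
    fix i j
    assume ij: "i \<in> {0..<n}" "j \<in> {0..<n}" "{i, Suc i mod n} = {j, Suc j mod n}" "i \<noteq> j"
    then have "i = Suc j mod n" "j = Suc i mod n"
      by (auto simp: doubleton_eq_iff)
    then have "(i + 2) mod n = i mod n"
      using ij(1) by (simp add: mod_Suc_eq)
    then have "n dvd 2"
      using mod_eq_dvd_iff_nat[of i "i + 2" n] by simp
    then show False
      using assms by (auto dest: dvd_imp_le)
  qed
  then show ?thesis
    unfolding cycle_graph_eq_image by (simp add: card_image)
qed

lemma connected_graph_cycle_graph: "connected_graph n (cycle_graph n)"
proof -
  let ?R = "adj_rel (cycle_graph n)"
  have from_0: "(0, i) \<in> ?R\<^sup>*" if "i < n" for i
    using that
  proof (induction i)
    case 0
    then show ?case by simp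
  next
    case (Suc i)
    then have "(i, Suc i) \<in> ?R"
      unfolding adj_rel_def cycle_graph_def by auto
    then show ?case
      using Suc by (meson Suc_lessD rtrancl.rtrancl_into_rtrancl)
  qed
  have "sym (?R\<^sup>*)"
    by (rule sym_rtrancl) (auto simp: sym_def adj_rel_def insert_commute)
  then show ?thesis
    unfolding connected_graph_def using from_0 by (meson rtrancl_trans symD)
qed

lemma degree_cycle_graph:
  assumes "3 \<le> n" "v < n"
  shows "degree (cycle_graph n) v = 2"
proof -
  define p where "p = (if v = 0 then n - 1 else v - 1)"
  have p: "p < n" "Suc p mod n = v"
    using assms unfolding p_def by auto
  have "e \<in> {{v, Suc v mod n}, {p, v}}" if e: "e \<in> cycle_graph n" "v \<in> e" for e
  proof -
    obtain i where i: "i < n" "e = {i, Suc i mod n}"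
      using e(1) unfolding cycle_graph_def by auto
    have "i = p" if "v = Suc i mod n"
      using i(1) that unfolding p_def by (cases "Suc i = n") auto
    then show ?thesis
      using i e(2) by auto
  qed
  moreover have "{{v, Suc v mod n}, {p, v}} \<subseteq> cycle_graph n"
    using assms p unfolding cycle_graph_def by auto
  ultimately have "{e \<in> cycle_graph n. v \<in> e} = {{v, Suc v mod n}, {p, v}}"
    by auto
  moreover have "{v, Suc v mod n} \<noteq> {p, v}"
    using assms unfolding p_def by (cases "Suc v = n") (auto simp: doubleton_eq_iff split: if_splits)
  ultimately show ?thesis
    unfolding degree_def by simp
qed

lemma cycle_graph_in_chem_graphs:
  assumes "3 \<le> n"
  shows "cycle_graph n \<in> chem_graphs n n"
  unfolding chem_graphs_def
  using simple_graph_cycle_graph[OF assms] connected_graph_cycle_graph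
    card_cycle_graph[OF assms] degree_cycle_graph[OF assms]
  by auto

section \<open>Connected 2-regular graphs are cycles\<close>

lemma graph_iso_sym:
  assumes "graph_iso n E F" "simple_graph n E"
  shows "graph_iso n F E"
proof -
  obtain f where f: "bij_betw f {0..<n} {0..<n}" "(\<lambda>e. f ` e) ` E = F"
    using assms(1) unfolding graph_iso_def by blast
  define g where "g = the_inv_into {0..<n} f"
  have g: "bij_betw g {0..<n} {0..<n}"
    unfolding g_def by (rule bij_betw_the_inv_into[OF f(1)])
  have "g ` f ` e = e" if "e \<in> E" for e
  proof -
    have "g (f x) = x" if "x \<in> e" for x
      using simple_graph_vertex_less[OF assms(2) \<open>e \<in> E\<close> that] f(1)
      unfolding g_def bij_betw_def by (simp add: the_inv_into_f_f)
    then show ?thesis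
      by (simp add: image_image cong: image_cong)
  qed
  then have "(\<lambda>e. g ` e) ` F = E"
    unfolding f(2)[symmetric] image_image by simp
  with g show ?thesis
    unfolding graph_iso_def by blast
qed

lemma obtain_first_repeat:
  fixes w :: "nat \<Rightarrow> 'a"
  assumes "finite (range w)"
  obtains p where "inj_on w {0..<p}" "w p \<in> w ` {0..<p}"
proof -
  define P where "P p \<longleftrightarrow> w p \<in> w ` {0..<p}" for p
  have P_repeat: "P y" if "x < y" "w x = w y" for x y
    unfolding P_def by (rule image_eqI[of _ _ x]) (use that in auto)
  have "\<not> inj w"
    using assms finite_imageD infinite_UNIV_nat by blast
  then obtain a b where "a \<noteq> b" "w a = w b"
    unfolding inj_def by blast
  then have "\<exists>p. P p"
    using P_repeat by (metis linorder_neqE_nat)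
  then have "P (LEAST p. P p)"
    by (rule LeastI_ex)
  moreover have "inj_on w {0..<(LEAST p. P p)}"
  proof (rule inj_onI, rule ccontr)
    fix x y
    assume xy: "x \<in> {0..<(LEAST p. P p)}" "y \<in> {0..<(LEAST p. P p)}" "w x = w y" "x \<noteq> y"
    then have "P (max x y)"
      using P_repeat[of x y] P_repeat[of y x] by (cases "x < y") (auto simp: max_def)
    then show False
      using not_less_Least[of "max x y" P] xy by auto
  qed
  ultimately show ?thesis
    using that unfolding P_def by blast
qed

definition nbrs :: "nat set set \<Rightarrow> nat \<Rightarrow> nat set" where
  "nbrs E v = {u. {v, u} \<in> E}"

lemma nbrs_sym: "u \<in> nbrs E v \<longleftrightarrow> v \<in> nbrs E u"
  unfolding nbrs_def by (simp add: insert_commute)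

lemma card_nbrs:
  assumes "simple_graph n E"
  shows "card (nbrs E v) = degree E v"
proof -
  have "bij_betw (\<lambda>u. {v, u}) (nbrs E v) {e\<in>E. v \<in> e}"
  proof (rule bij_betwI')
    fix u u'
    assume "u \<in> nbrs E v" "u' \<in> nbrs E v"
    then have "u \<noteq> v" "u' \<noteq> v"
      using simple_graph_edge_neq[OF assms] unfolding nbrs_def by blast+
    then show "({v, u} = {v, u'}) = (u = u')"
      by (auto simp: doubleton_eq_iff)
  next
    fix e
    assume e: "e \<in> {e\<in>E. v \<in> e}"
    then obtain a b where "e = {a, b}"
      using assms unfolding simple_graph_def by blast
    with e show "\<exists>u\<in>nbrs E v. e = {v, u}"
      unfolding nbrs_def by (auto simp: insert_commute)
  qed (simp add: nbrs_def)
  then show ?thesis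
    unfolding degree_def by (rule bij_betw_same_card)
qed

lemma card_2_eq_doubleton: "card A = 2 \<Longrightarrow> a \<in> A \<Longrightarrow> b \<in> A \<Longrightarrow> a \<noteq> b \<Longrightarrow> A = {a, b}"
  by (metis card_2_iff doubleton_eq_iff insertE singletonD)

definition non_backtracking_walk :: "nat set set \<Rightarrow> (nat \<Rightarrow> nat) \<Rightarrow> bool" where
  "non_backtracking_walk E w \<longleftrightarrow> (\<forall>k. w (Suc k) \<in> nbrs E (w k) \<and> w (Suc (Suc k)) \<noteq> w k)"

locale two_regular_graph =
  fixes n :: nat and E :: "nat set set"
  assumes simple: "simple_graph n E"
    and two_regular: "\<And>v. v < n \<Longrightarrow> degree E v = 2"
begin

lemma nbrs_less: "u \<in> nbrs E v \<Longrightarrow> u < n \<and> v < n"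
  using simple_graph_vertex_less[OF simple] unfolding nbrs_def by blast

lemma nbrs_irrefl: "v \<notin> nbrs E v"
  using simple_graph_edge_neq[OF simple] unfolding nbrs_def by blast

lemma card_nbrs_2: "v < n \<Longrightarrow> card (nbrs E v) = 2"
  using card_nbrs[OF simple] two_regular by simp

lemma ex_other_nbr:
  assumes "v < n"
  obtains u where "u \<in> nbrs E v" "u \<noteq> x"
  using card_nbrs_2[OF assms] by (metis card_2_iff insertCI)

lemma non_backtracking_walk_exists:
  assumes "x < n"
  obtains w where "non_backtracking_walk E w" "w 0 = x"
proof -
  define step where "step = (\<lambda>(a, b). (b, SOME c. c \<in> nbrs E b \<and> c \<noteq> a))"
  obtain y where y: "y \<in> nbrs E x"
    using ex_other_nbr[OF assms] by blast
  define st where "st k = (step ^^ k) (x, y)" for k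
  define w where "w k = fst (st k)" for k
  have st_Suc: "st (Suc k) = step (st k)" for k
    unfolding st_def by simp
  have snd_st: "snd (st k) = w (Suc k)" for k
    unfolding w_def st_Suc step_def by (simp add: case_prod_beta)
  have w_SS: "w (Suc (Suc k)) = (SOME c. c \<in> nbrs E (w (Suc k)) \<and> c \<noteq> w k)" for k
  proof -
    have "w (Suc (Suc k)) = snd (step (st k))"
      by (simp add: snd_st[symmetric] st_Suc)
    then show ?thesis
      by (simp add: step_def case_prod_beta snd_st w_def)
  qed
  have some: "w (Suc (Suc k)) \<in> nbrs E (w (Suc k)) \<and> w (Suc (Suc k)) \<noteq> w k"
    if "w (Suc k) < n" for k
    unfolding w_SS by (rule someI_ex) (use ex_other_nbr[OF that] in blast)
  have adj: "w (Suc k) \<in> nbrs E (w k)" for k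
  proof (induction k)
    case 0
    then show ?case
      using y snd_st[of 0] unfolding w_def st_def by simp
  next
    case (Suc k)
    then show ?case
      using some nbrs_less by blast
  qed
  have "non_backtracking_walk E w"
    unfolding non_backtracking_walk_def using adj some nbrs_less by blast
  moreover have "w 0 = x"
    unfolding w_def st_def by simp
  ultimately show ?thesis
    by (rule that)
qed

context
  fixes w :: "nat \<Rightarrow> nat"
  assumes walk: "non_backtracking_walk E w"
begin

lemma walk_adj: "w (Suc k) \<in> nbrs E (w k)"
  using walk unfolding non_backtracking_walk_def by blast

lemma walk_less: "w k < n"
  using nbrs_less[OF walk_adj] by blast

lemma walk_nbrs: "nbrs E (w (Suc i)) = {w i, w (Suc (Suc i))}"
proof (rule card_2_eq_doubleton)
  show "card (nbrs E (w (Suc i))) = 2"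
    using card_nbrs_2[OF walk_less] .
  show "w i \<in> nbrs E (w (Suc i))"
    using walk_adj nbrs_sym by blast
  show "w (Suc (Suc i)) \<in> nbrs E (w (Suc i))"
    using walk_adj .
  show "w i \<noteq> w (Suc (Suc i))"
    using walk unfolding non_backtracking_walk_def by metis
qed

lemma walk_first_repeat_ge_3:
  assumes "w p \<in> w ` {0..<p}"
  shows "3 \<le> p"
proof -
  have "w 1 \<noteq> w 0" "w 2 \<noteq> w 1"
    using walk_adj[of 0] walk_adj[of 1] nbrs_irrefl by (metis One_nat_def Suc_1)+
  moreover have "w 2 \<noteq> w 0"
    using walk unfolding non_backtracking_walk_def by (metis One_nat_def Suc_1)
  moreover obtain j where "j < p" "w p = w j"
    using assms by auto
  moreover have "p = 1 \<and> j = 0 \<or> p = 2 \<and> (j = 0 \<or> j = 1)" if "\<not> 3 \<le> p"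
    using that \<open>j < p\<close> by arith
  ultimately show ?thesis
    by (metis One_nat_def Suc_1)
qed

text \<open>The first repeated vertex of a non-backtracking walk is its starting point: a repetition
  \<open>w p = w j\<close> with \<open>0 < j\<close> would give \<open>w j\<close> a third neighbour \<open>w (p - 1)\<close>.\<close>

lemma walk_first_repeat:
  assumes inj: "inj_on w {0..<p}" and rep: "w p \<in> w ` {0..<p}"
  shows "w p = w 0"
proof (rule ccontr)
  assume ne: "w p \<noteq> w 0"
  obtain j where j: "j < p" "w p = w j"
    using rep by auto
  with ne obtain i where i: "j = Suc i"
    by (cases j) auto
  obtain q where q: "p = Suc q"
    using j(1) by (cases p) auto
  have "w q \<in> nbrs E (w p)"
    using walk_adj[of q] nbrs_sym q by simp
  then have "w q = w i \<or> w q = w (Suc j)"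
    using walk_nbrs[of i] i j(2) by simp
  moreover have "w q \<noteq> w i"
    using inj_on_eq_iff[OF inj, of q i] i j(1) q by simp
  moreover have "w q \<noteq> w (Suc j)"
  proof (cases "Suc j = p")
    case True
    then show ?thesis
      using walk_adj[of q] nbrs_irrefl q by auto
  next
    case False
    have "w (Suc (Suc j)) \<noteq> w j"
      using walk unfolding non_backtracking_walk_def by blast
    then have "q \<noteq> Suc j"
      using j(2) q by auto
    then show ?thesis
      using inj_on_eq_iff[OF inj, of q "Suc j"] False j(1) q by simp
  qed
  ultimately show False
    by blast
qed

lemma walk_first_repeat_closed:
  assumes inj: "inj_on w {0..<p}" and rep: "w p \<in> w ` {0..<p}" and "i < p"
  shows "nbrs E (w i) \<subseteq> w ` {0..<p}"
proof (cases i)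
  case 0
  obtain q where q: "p = Suc q"
    using assms(3) by (cases p) auto
  have p3: "3 \<le> p"
    using walk_first_repeat_ge_3[OF rep] .
  have "w q \<in> nbrs E (w 0)"
    using walk_adj[of q] nbrs_sym q walk_first_repeat[OF inj rep] by simp
  moreover have "w 1 \<noteq> w q"
    using inj_on_eq_iff[OF inj, of 1 q] q p3 by simp
  ultimately have "nbrs E (w 0) = {w 1, w q}"
    using card_2_eq_doubleton[OF card_nbrs_2[OF walk_less]] walk_adj[of 0] by simp
  then show ?thesis
    using 0 q p3 by auto
next
  case (Suc h)
  have "w (Suc i) \<in> w ` {0..<p}"
  proof (cases "Suc i < p")
    case True
    then show ?thesis by auto
  next
    case False
    then have "Suc i = p"
      using assms(3) by simp
    then show ?thesis
      using walk_first_repeat[OF inj rep] assms(3) by force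
  qed
  then show ?thesis
    using walk_nbrs[of h] Suc assms(3) by auto
qed

end

text \<open>A walk without backtracking from vertex 0 meets every vertex before it first returns to 0.\<close>

lemma cycle_enumeration:
  assumes conn: "connected_graph n E" and "0 < n"
  obtains w where "bij_betw w {0..<n} {0..<n}" "w n = w 0" "\<And>k. {w k, w (Suc k)} \<in> E"
proof -
  obtain w where walk: "non_backtracking_walk E w" and w0: "w 0 = 0"
    using non_backtracking_walk_exists[OF assms(2)] by blast
  note walk_less = walk_less[OF walk]
  have "finite (range w)"
    using walk_less by (auto intro: finite_subset[of _ "{0..<n}"])
  then obtain p where inj: "inj_on w {0..<p}" and rep: "w p \<in> w ` {0..<p}"
    by (rule obtain_first_repeat)
  let ?C = "w ` {0..<p}"
  have all: "v \<in> ?C" if "v < n" for v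
  proof -
    have "(0, v) \<in> (adj_rel E)\<^sup>*"
      using conn that assms(2) unfolding connected_graph_def by blast
    moreover have "0 \<in> ?C"
      using w0 walk_first_repeat_ge_3[OF walk rep] by force
    ultimately show ?thesis
    proof (rule rtrancl_adj_rel_closed)
      fix x y
      assume "{x, y} \<in> E" "x \<in> ?C"
      then obtain i where "i < p" "y \<in> nbrs E (w i)"
        unfolding nbrs_def by auto
      then show "y \<in> ?C"
        using walk_first_repeat_closed[OF walk inj rep] by blast
    qed
  qed
  have C: "?C = {0..<n}"
    using all walk_less by auto
  then have "p = n"
    using card_image[OF inj] by simp
  show ?thesis
  proof (rule that)
    show "bij_betw w {0..<n} {0..<n}"
      using inj C \<open>p = n\<close> unfolding bij_betw_def by simp
    show "w n = w 0"
      using walk_first_repeat[OF walk inj rep] \<open>p = n\<close> by simp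
    show "{w k, w (Suc k)} \<in> E" for k
      using walk_adj[OF walk] unfolding nbrs_def by blast
  qed
qed

lemma graph_iso_cycle_graph:
  assumes "connected_graph n E" "card E = n" "3 \<le> n"
  shows "graph_iso n E (cycle_graph n)"
proof -
  obtain w where w: "bij_betw w {0..<n} {0..<n}" "w n = w 0" "\<And>k. {w k, w (Suc k)} \<in> E"
    by (rule cycle_enumeration) (use assms in auto)
  have "w ` {i, Suc i mod n} = {w i, w (Suc i)}" if "i < n" for i
    using that w(2) by (cases "Suc i = n") auto
  then have sub: "(\<lambda>e. w ` e) ` cycle_graph n \<subseteq> E"
    using w(3) unfolding cycle_graph_eq_image by auto
  have "inj_on (\<lambda>e. w ` e) (cycle_graph n)"
  proof (rule inj_onI)
    fix a b
    assume "a \<in> cycle_graph n" "b \<in> cycle_graph n" "w ` a = w ` b"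
    moreover have "e \<subseteq> {0..<n}" if "e \<in> cycle_graph n" for e
      using simple_graph_vertex_less[OF simple_graph_cycle_graph[OF assms(3)] that] by auto
    ultimately show "a = b"
      using inj_on_image_eq_iff[of w "{0..<n}" a b] w(1) unfolding bij_betw_def by blast
  qed
  then have "card ((\<lambda>e. w ` e) ` cycle_graph n) = card E"
    using card_cycle_graph[OF assms(3)] assms(2) by (simp add: card_image)
  then have "(\<lambda>e. w ` e) ` cycle_graph n = E"
    using card_subset_eq[OF simple_graph_finite[OF simple] sub] by simp
  then have "graph_iso n (cycle_graph n) E"
    using w(1) unfolding graph_iso_def by blast
  then show ?thesis
    using graph_iso_sym simple_graph_cycle_graph[OF assms(3)] by blast
qed

end

lemma unicyclic_graph_iso_cycle_graph:
  assumes "E \<in> chem_graphs n n" "3 \<le> n" "n_deg n E 1 = 0"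
  shows "graph_iso n E (cycle_graph n)"
proof -
  have "simple_graph n E" "connected_graph n E" "card E = n"
    using assms(1) unfolding chem_graphs_def by blast+
  interpret two_regular_graph n E
    by unfold_locales (use \<open>simple_graph n E\<close> unicyclic_two_regular[OF assms] in auto)
  show ?thesis
    using graph_iso_cycle_graph \<open>connected_graph n E\<close> \<open>card E = n\<close> assms(2) by blast
qed

section \<open>Extremality of the cycle\<close>

lemma weighted_sum_le:
  fixes x y z a b c :: real
  assumes "0 \<le> x" "0 \<le> y" "0 \<le> z" "z \<le> x + y"
  shows "x * a + y * b + z * c \<le> (x + y) * (max a b + max 0 c)"
proof -
  have "z * c \<le> z * max 0 c"
    using assms(3) by (simp add: mult_left_mono)
  also have "\<dots> \<le> (x + y) * max 0 c"
    using assms(4) by (simp add: mult_right_mono)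
  finally have "z * c \<le> (x + y) * max 0 c" .
  moreover have "x * a \<le> x * max a b" "y * b \<le> y * max a b"
    using assms(1,2) by (simp_all add: mult_left_mono)
  ultimately show ?thesis
    by (simp add: algebra_simps)
qed

lemma topo_index_unicyclic_le:
  assumes "E \<in> chem_graphs n n" "3 \<le> n"
  shows "topo_index c12 c13 c22 c23 c33 E \<le> real n * c22 + real (n_deg n E 1)
    * (max (c12 - 4*c22 + 3*c23) (c13 - 3*c22 + 2*c23) + max 0 (c22 - 2*c23 + c33))"
proof -
  have "real (m_ij E 3 3) \<le> real (m_ij E 1 2) + real (m_ij E 1 3)"
    using unicyclic_m_33_le[OF assms] unicyclic_degree_class_identities(1)[OF assms] by simp
  then have "real (m_ij E 1 2) * (c12 - 4*c22 + 3*c23) + real (m_ij E 1 3) * (c13 - 3*c22 + 2*c23)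
      + real (m_ij E 3 3) * (c22 - 2*c23 + c33)
    \<le> (real (m_ij E 1 2) + real (m_ij E 1 3))
      * (max (c12 - 4*c22 + 3*c23) (c13 - 3*c22 + 2*c23) + max 0 (c22 - 2*c23 + c33))"
    by (intro weighted_sum_le) simp_all
  then show ?thesis
    using topo_index_unicyclic[OF assms] unicyclic_degree_class_identities(1)[OF assms] by simp
qed

lemma topo_index_cycle_graph:
  assumes "3 \<le> n"
  shows "topo_index c12 c13 c22 c23 c33 (cycle_graph n) = real n * c22"
proof -
  note cyc = cycle_graph_in_chem_graphs[OF assms]
  have "n_deg n (cycle_graph n) 1 = 0"
    using degree_cycle_graph[OF assms] unfolding n_deg_def by simp
  then have "m_ij (cycle_graph n) 1 2 = 0" "m_ij (cycle_graph n) 1 3 = 0" "m_ij (cycle_graph n) 3 3 = 0"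
    using unicyclic_degree_class_identities(1)[OF cyc assms] unicyclic_m_33_le[OF cyc assms] by simp_all
  then show ?thesis
    using topo_index_unicyclic[OF cyc assms] by simp
qed

theorem corollary2:
  fixes n :: nat and c12 c13 c22 c23 c33 :: real
  assumes "n \<ge> 3"
  assumes "max (c12 - 4*c22 + 3*c23) (c13 - 3*c22 + 2*c23) < min 0 (- (c22 - 2*c23 + c33))"
  shows "cycle_graph n \<in> chem_graphs n n
    \<and> (\<forall>E \<in> chem_graphs n n. topo_index c12 c13 c22 c23 c33 E \<le> topo_index c12 c13 c22 c23 c33 (cycle_graph n))
    \<and> (\<forall>E \<in> chem_graphs n n. topo_index c12 c13 c22 c23 c33 E = topo_index c12 c13 c22 c23 c33 (cycle_graph n)
           \<longrightarrow> graph_iso n E (cycle_graph n))"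
proof -
  let ?I = "topo_index c12 c13 c22 c23 c33"
  define M where "M = max (c12 - 4*c22 + 3*c23) (c13 - 3*c22 + 2*c23) + max 0 (c22 - 2*c23 + c33)"
  have "M < 0"
    using assms(2) unfolding M_def by linarith
  have le: "?I E \<le> ?I (cycle_graph n) + real (n_deg n E 1) * M" if "E \<in> chem_graphs n n" for E
    using topo_index_unicyclic_le[OF that assms(1)] topo_index_cycle_graph[OF assms(1)]
    unfolding M_def by simp
  have "?I E \<le> ?I (cycle_graph n)" if "E \<in> chem_graphs n n" for E
    using le[OF that] \<open>M < 0\<close> mult_nonneg_nonpos[of "real (n_deg n E 1)" M] by linarith
  moreover have "graph_iso n E (cycle_graph n)"
    if E: "E \<in> chem_graphs n n" and eq: "?I E = ?I (cycle_graph n)" for E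
  proof -
    have "0 \<le> real (n_deg n E 1) * M"
      using le[OF E] eq by linarith
    then have "n_deg n E 1 = 0"
      using \<open>M < 0\<close> by (simp add: zero_le_mult_iff)
    then show ?thesis
      using unicyclic_graph_iso_cycle_graph[OF E assms(1)] by blast
  qed
  ultimately show ?thesis
    using cycle_graph_in_chem_graphs[OF assms(1)] by blast
qed

end
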